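(* Let $\mu$ be a finite Borel measure on $\mathbb{R}^d$. Then the following hold. (i) Let $A$ be an affine subspace of $\mathbb{R}^d$ that contains at least two points. Then \[ \operatorname{supp}(\mu|_A) \subseteq \operatorname{cl}_A\Big( \bigcup_{\alpha \geq 0} \operatorname{bd}_A\big( D_\alpha(\mu) \cap A \big) \Big). \] In particular (taking $A = \mathbb{R}^d$), \[ \operatorname{supp}(\mu) \subseteq \operatorname{cl}\Big( \bigcup_{\alpha \geq 0} \operatorname{bd}\big( D_\alpha(\mu) \big) \Big). \] (ii) If $x \in \mathbb{R}^d$ is an atom of $\mu$ (i.e. $\mu(\{x\}) > 0$) and $D(x;\mu) = \alpha$, then $x$ is an extreme point of $D_\beta(\mu)$ for every $\beta \in (\alpha - \mu(\{x\}), \alpha]$. (iii) Let $x \in \mathbb{R}^d$ with $D(x;\mu) = \alpha$, let $z \in U_\alpha(\mu)$, and let $y \in \mathbb{R}^d$ be such that $x$ belongs to the open line segment $L(y,z)$ between $y$ and $z$. Then \[ D(y;\mu) \leq D(x;\mu) - \mu(\{x\}). \]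
   Context: A (closed) halfspace in $\mathbb{R}^d$ is a set $\{y \in \mathbb{R}^d : \langle y, u\rangle \leq c\}$ with $c \in \mathbb{R}$, $u \in \mathbb{R}^d\setminus\{0\}$. For $x \in \mathbb{R}^d$, let $\mathcal{H}(x)$ be the set of closed halfspaces whose boundary hyperplane contains $x$. For a finite Borel measure $\mu$ on $\mathbb{R}^d$, the halfspace (Tukey) depth of $x$ is $D(x;\mu) = \inf_{H \in \mathcal{H}(x)} \mu(H)$. For $\alpha \geq 0$, the central regions are $D_\alpha(\mu) = \{x \in \mathbb{R}^d : D(x;\mu) \geq \alpha\}$ and $U_\alpha(\mu) = \{x \in \mathbb{R}^d : D(x;\mu) > \alpha\}$. "Subspace" means affine subspace. For an affine subspace $A$ and $B \subseteq A$, $\operatorname{cl}_A(B)$ and $\operatorname{bd}_A(B)$ denote the closure and boundary of $B$ relative to $A$ (with its subspace topology); $\operatorname{cl}$, $\operatorname{bd}$ denote closure and boundary in $\mathbb{R}^d$. The restriction $\mu|_A$ is the Borel measure $\mu|_A(B) = \mu(B \cap A)$, and $\operatorname{supp}(\nu)$ is the smallest closed subset of $\mathbb{R}^d$ of full $\nu$-measure. For $x \neq y$, $L(x,y)$ denotes the open line segment between $x$ and $y$ (the segment without its endpoints). A point $z$ of a convex set $C$ is an extreme point of $C$ if $z$ is not the midpoint of any two distinct points of $C$ (equivalently $\{z\}$ is a face of $C$). *)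

theory Defs
  imports "HOL-Analysis.Analysis"
begin

definition hdepth :: "'a::euclidean_space measure \<Rightarrow> 'a \<Rightarrow> real" where
  "hdepth M x = (INF u \<in> {u. u \<noteq> 0}. measure M {y. y \<bullet> u \<le> x \<bullet> u})"

definition depth_region :: "'a::euclidean_space measure \<Rightarrow> real \<Rightarrow> 'a set" where
  "depth_region M \<alpha> = {x. hdepth M x \<ge> \<alpha>}"

definition depth_region_strict :: "'a::euclidean_space measure \<Rightarrow> real \<Rightarrow> 'a set" where
  "depth_region_strict M \<alpha> = {x. hdepth M x > \<alpha>}"

definition restr_measure :: "'a measure \<Rightarrow> 'a set \<Rightarrow> 'a measure" where
  "restr_measure M A = density M (indicator A)"

definition msupp :: "'a::topological_space measure \<Rightarrow> 'a set" where
  "msupp N = \<Inter> {C. closed C \<and> C \<in> sets N \<and> emeasure N (space N - C) = 0}"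

end

theory Submission
  imports Defs
begin

text \<open>
  Parts (ii) and (iii) rest on refined halfspaces: the depth of \<open>p\<close> is also bounded by the
  measure of \<open>{y. (y - p) \<bullet> u < 0} \<union> {y. (y - p) \<bullet> u = 0 \<and> (y - p) \<bullet> w \<le> 0}\<close>, the pointwise
  limit of the closed halfspaces with normals \<open>u + t w\<close>, \<open>t \<rightarrow> 0+\<close>.  Taking \<open>w = x - p\<close> for a
  point \<open>p\<close> behind \<open>x\<close> removes the atom at \<open>x\<close>, so the depth drops by \<open>\<mu>{x}\<close> past \<open>x\<close>.

  For part (i), a point of the support of \<open>\<mu>|A\<close> away from all relative boundaries of the
  central regions has a neighbourhood in \<open>A\<close> on which the depth is constant.  Pick a flat
  \<open>E \<subseteq> A\<close> of minimal dimension still charging this neighbourhood; then all proper hyperplane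
  sections of \<open>E\<close> there are null.  If \<open>E\<close> is a point, it is an atom in the middle of a depth
  plateau, which (ii) forbids.  Otherwise every open half of \<open>E\<close> through the barycentre \<open>c\<close>
  of the mass carries at least some \<open>\<kappa> > 0\<close> (by compactness of the directions), and adding
  this mass to a refined halfspace at a point of \<open>E\<close> behind \<open>c\<close> shows that the depth at
  \<open>c\<close> exceeds the plateau value.
\<close>

lemma open_segment_endpoint_in_halfspace:
  fixes u :: "'a::euclidean_space"
  assumes "x \<in> open_segment a c"
  shows "(a - x) \<bullet> u \<le> 0 \<or> (c - x) \<bullet> u \<le> 0"
proof -
  from assms obtain t where t: "0 < t" "t < 1" "x = (1 - t) *\<^sub>R a + t *\<^sub>R c"
    by (auto simp: in_segment)
  have "a - x = (- t) *\<^sub>R (c - a)" "c - x = (1 - t) *\<^sub>R (c - a)"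
    using t(3) by (simp_all add: algebra_simps)
  then show ?thesis
    using t(1,2) by (cases "(c - a) \<bullet> u \<le> 0") (auto simp: mult_nonneg_nonpos mult_nonpos_nonpos)
qed

lemma exists_open_segment_in_affine_ball:
  fixes A :: "'a::euclidean_space set"
  assumes A: "affine A" "c \<in> A" "q \<in> A" "q \<noteq> c" and \<epsilon>: "0 < \<epsilon>"
  obtains a b where "a \<in> A \<inter> ball c \<epsilon>" "b \<in> A \<inter> ball c \<epsilon>" "c \<in> open_segment a b"
proof -
  define \<tau> where "\<tau> = \<epsilon> / (2 * norm (q - c))"
  have \<tau>: "0 < \<tau>" "\<tau> * norm (q - c) < \<epsilon>"
    using A(4) \<epsilon> by (auto simp: \<tau>_def)
  define a where "a = c + \<tau> *\<^sub>R (q - c)"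
  define b where "b = c - \<tau> *\<^sub>R (q - c)"
  have "a \<in> A" "b \<in> A"
    using mem_affine[OF A(1-3), of "1 - \<tau>" \<tau>] mem_affine[OF A(1-3), of "1 + \<tau>" "- \<tau>"]
    by (simp_all add: a_def b_def algebra_simps)
  moreover have "a \<in> ball c \<epsilon>" "b \<in> ball c \<epsilon>"
    using \<tau> by (simp_all add: a_def b_def dist_norm)
  moreover have "c \<in> open_segment a b"
  proof -
    have "a + b = 2 *\<^sub>R c"
      by (simp add: a_def b_def scaleR_2)
    then have mid: "c = midpoint a b"
      by (simp add: midpoint_def)
    moreover have "a \<noteq> c"
      using \<tau>(1) A(4) by (simp add: a_def)
    ultimately have "a \<noteq> b"
      by auto
    with mid show ?thesis
      by simp
  qed
  ultimately show ?thesis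
    using that by blast
qed

lemma subspace_inner_eq_scaled_unit:
  fixes S :: "'a::euclidean_space set"
  assumes S: "subspace S" "S \<noteq> {0}"
  obtains w l where "w \<in> S" "norm w = 1" "0 \<le> l" "\<And>d. d \<in> S \<Longrightarrow> d \<bullet> u = l * (d \<bullet> w)"
proof -
  obtain v z where v: "v \<in> span S" and z: "\<And>d. d \<in> span S \<Longrightarrow> orthogonal z d" and u: "u = v + z"
    using orthogonal_subspace_decomp_exists[of S u] by blast
  have vS: "v \<in> S"
    using v S(1) by (metis span_eq_iff)
  have dz: "d \<bullet> z = 0" if "d \<in> S" for d
    using z[OF span_base[OF that]] by (simp add: orthogonal_def inner_commute)
  show ?thesis
  proof (cases "v = 0")
    case True
    obtain d where "d \<in> S" "d \<noteq> 0"
      using S subspace_0 by blast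
    then show ?thesis
      using that[of "d /\<^sub>R norm d" 0] S(1) True dz u by (simp add: subspace_scale)
  next
    case False
    show ?thesis
    proof (rule that[of "v /\<^sub>R norm v" "norm v"])
      show "v /\<^sub>R norm v \<in> S"
        using vS S(1) by (simp add: subspace_scale)
    qed (use False dz u in \<open>auto simp: inner_add_right\<close>)
  qed
qed

lemma compact_uniform_lower_bound:
  fixes f :: "'a::metric_space \<Rightarrow> real"
  assumes S: "compact S"
    and local: "\<And>x. x \<in> S \<Longrightarrow> \<exists>\<delta>>0. \<exists>k>0. \<forall>x'. dist x x' < \<delta> \<longrightarrow> k \<le> f x'"
  obtains \<kappa> where "0 < \<kappa>" "\<And>x. x \<in> S \<Longrightarrow> \<kappa> \<le> f x"
proof -
  obtain \<delta> where \<delta>: "\<forall>x\<in>S. 0 < \<delta> x \<and> (\<exists>k>0. \<forall>x'. dist x x' < \<delta> x \<longrightarrow> k \<le> f x')"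
    using bchoice[of S "\<lambda>x \<delta>. 0 < \<delta> \<and> (\<exists>k>0. \<forall>x'. dist x x' < \<delta> \<longrightarrow> k \<le> f x')"] local by blast
  obtain k where k: "\<forall>x\<in>S. 0 < k x \<and> (\<forall>x'. dist x x' < \<delta> x \<longrightarrow> k x \<le> f x')"
    using bchoice[of S "\<lambda>x k. 0 < k \<and> (\<forall>x'. dist x x' < \<delta> x \<longrightarrow> k \<le> f x')"] \<delta> by blast
  obtain T where T: "T \<subseteq> S" "finite T" "S \<subseteq> (\<Union>x\<in>T. ball x (\<delta> x))"
  proof (rule compactE_image[OF S, of S "\<lambda>x. ball x (\<delta> x)"])
    show "S \<subseteq> (\<Union>x\<in>S. ball x (\<delta> x))"
      using \<delta> by force
  qed auto
  show ?thesis
  proof (rule that)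
    show "0 < Min (insert 1 (k ` T))"
      using T k by (subst Min_gr_iff) auto
    fix x' assume "x' \<in> S"
    then obtain x where "x \<in> T" "dist x x' < \<delta> x"
      using T(3) by auto
    then have "k x \<le> f x'"
      using T(1) k by blast
    moreover have "Min (insert 1 (k ` T)) \<le> k x"
      using T(2) \<open>x \<in> T\<close> by simp
    ultimately show "Min (insert 1 (k ` T)) \<le> f x'"
      by linarith
  qed
qed

section \<open>Refined halfspaces\<close>

definition refined_halfspace :: "'a::real_inner \<Rightarrow> 'a \<Rightarrow> 'a \<Rightarrow> 'a set" where
  "refined_halfspace s u w = {y. (y - s) \<bullet> u < 0 \<or> ((y - s) \<bullet> u = 0 \<and> (y - s) \<bullet> w \<le> 0)}"

lemma tendsto_indicator_refined_halfspace:
  fixes t :: "nat \<Rightarrow> real"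
  assumes t: "t \<longlonglongrightarrow> 0" "\<And>n. 0 < t n"
  shows "(\<lambda>n. indicator {y. (y - s) \<bullet> (u + t n *\<^sub>R w) \<le> 0} y :: real)
    \<longlonglongrightarrow> indicator (refined_halfspace s u w) y"
proof -
  have lim: "(\<lambda>n. (y - s) \<bullet> u + t n * ((y - s) \<bullet> w)) \<longlonglongrightarrow> (y - s) \<bullet> u"
    using tendsto_add[OF tendsto_const tendsto_mult[OF t(1) tendsto_const]] by simp
  consider "(y - s) \<bullet> u < 0" | "(y - s) \<bullet> u > 0" | "(y - s) \<bullet> u = 0"
    by linarith
  then show ?thesis
  proof cases
    case 1
    then show ?thesis
      using order_tendstoD(2)[OF lim 1]
      by (intro tendsto_eventually) (auto elim!: eventually_mono simp: indicator_def inner_add_right refined_halfspace_def)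
  next
    case 2
    then show ?thesis
      using order_tendstoD(1)[OF lim 2]
      by (intro tendsto_eventually) (auto elim!: eventually_mono simp: indicator_def inner_add_right refined_halfspace_def)
  next
    case 3
    then have "y \<in> {y. (y - s) \<bullet> (u + t n *\<^sub>R w) \<le> 0} \<longleftrightarrow> y \<in> refined_halfspace s u w" for n
      using t(2)[of n] by (auto simp: inner_add_right refined_halfspace_def mult_le_0_iff)
    then show ?thesis
      by (simp add: indicator_def)
  qed
qed

lemma refined_halfspace_subset_halfspace:
  fixes c u w :: "'a::real_inner"
  assumes "0 \<le> R * (w \<bullet> u)"
  shows "refined_halfspace (c - R *\<^sub>R w) u w \<subseteq> {y. y \<bullet> u \<le> c \<bullet> u}"
proof
  fix y assume "y \<in> refined_halfspace (c - R *\<^sub>R w) u w"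
  then have "(y - (c - R *\<^sub>R w)) \<bullet> u \<le> 0"
    by (auto simp: refined_halfspace_def)
  moreover have "(y - (c - R *\<^sub>R w)) \<bullet> u = (y - c) \<bullet> u + R * (w \<bullet> u)"
    by (simp add: inner_diff_left algebra_simps)
  ultimately have "(y - c) \<bullet> u \<le> 0"
    using assms by linarith
  then show "y \<in> {y. y \<bullet> u \<le> c \<bullet> u}"
    by (simp add: inner_diff_left)
qed

lemma not_in_refined_halfspace:
  fixes c u w :: "'a::real_inner"
  assumes w: "w \<bullet> w = 1" "w \<bullet> u = l" "0 \<le> l"
    and y: "(y - c) \<bullet> u = l * ((y - c) \<bullet> w)" "- R < (y - c) \<bullet> w"
  shows "y \<notin> refined_halfspace (c - R *\<^sub>R w) u w"
proof -
  have "(y - (c - R *\<^sub>R w)) \<bullet> w = (y - c) \<bullet> w + R"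
    using w(1) by (simp add: inner_diff_left algebra_simps)
  moreover have "(y - (c - R *\<^sub>R w)) \<bullet> u = l * ((y - c) \<bullet> w + R)"
    using w(2) y(1) by (simp add: inner_diff_left algebra_simps)
  moreover have "0 \<le> l * ((y - c) \<bullet> w + R)"
    using w(3) y(2) by simp
  ultimately show ?thesis
    using y(2) by (auto simp: refined_halfspace_def)
qed

section \<open>Halfspace depth\<close>

lemma hdepth_le_halfspace:
  fixes M :: "'a::euclidean_space measure"
  assumes "u \<noteq> 0"
  shows "hdepth M x \<le> measure M {y. y \<bullet> u \<le> x \<bullet> u}"
  unfolding hdepth_def using assms
  by (intro cINF_lower) (auto intro: bdd_belowI[where m=0])

lemma hdepth_geI:
  fixes M :: "'a::euclidean_space measure"
  assumes "\<And>u. u \<noteq> 0 \<Longrightarrow> a \<le> measure M {y. y \<bullet> u \<le> x \<bullet> u}"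
  shows "a \<le> hdepth M x"
  unfolding hdepth_def using assms nonzero_Basis SOME_Basis
  by (intro cINF_greatest) auto

lemma hdepth_nonneg: "0 \<le> hdepth M x"
  by (rule hdepth_geI) simp

lemma hdepth_less_obtains_halfspace:
  fixes M :: "'a::euclidean_space measure"
  assumes "hdepth M x < b"
  obtains u where "u \<noteq> 0" "measure M {y. y \<bullet> u \<le> x \<bullet> u} < b"
  using assms nonzero_Basis SOME_Basis unfolding hdepth_def
  by (subst (asm) cINF_less_iff) (auto intro: bdd_belowI[where m=0])

lemma hdepth_eq_on_connected:
  fixes M :: "'a::euclidean_space measure"
  assumes V: "connected V" "V \<subseteq> A"
    and disjoint: "V \<inter> (\<Union>\<alpha>\<in>{0..}. (subtopology euclidean A) frontier_of (depth_region M \<alpha> \<inter> A)) = {}"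
    and pq: "p \<in> V" "q \<in> V"
  shows "hdepth M p = hdepth M q"
proof -
  have "connectedin (subtopology euclidean A) V"
    using V by (simp add: connectedin_subtopology)
  have le: "hdepth M p' \<le> hdepth M q'" if "p' \<in> V" "q' \<in> V" for p' q'
  proof (rule ccontr)
    define T where "T = depth_region M (hdepth M p') \<inter> A"
    assume "\<not> ?thesis"
    then have "V \<inter> T \<noteq> {}" "V - T \<noteq> {}"
      using that V(2) by (auto simp: T_def depth_region_def)
    then have "V \<inter> (subtopology euclidean A) frontier_of T \<noteq> {}"
      by (rule connectedin_Int_frontier_of[OF \<open>connectedin _ V\<close>])
    then show False
      using disjoint hdepth_nonneg[of M p'] by (auto simp: T_def)
  qed
  show ?thesis
    using le[OF pq] le[OF pq(2,1)] by simp
qed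

lemma exists_affine_null_hyperplane_sections:
  fixes A :: "'a::euclidean_space set"
  assumes "affine A" "0 < measure M (A \<inter> B)"
  obtains E where "affine E" "E \<subseteq> A" "0 < measure M (E \<inter> B)"
    "\<And>w b. \<not> E \<subseteq> {y. w \<bullet> y = b} \<Longrightarrow> measure M (E \<inter> {y. w \<bullet> y = b} \<inter> B) = 0"
proof -
  define F where "F E \<longleftrightarrow> affine E \<and> E \<subseteq> A \<and> 0 < measure M (E \<inter> B)" for E
  have "F A"
    using assms by (simp add: F_def)
  then obtain E where E: "F E" and min: "\<And>E'. F E' \<Longrightarrow> nat (aff_dim E) \<le> nat (aff_dim E')"
    using ex_has_least_nat[of F A "\<lambda>E. nat (aff_dim E)"] by blast
  then have E_affine: "affine E" and E_sub: "E \<subseteq> A"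
    by (simp_all add: F_def)
  show ?thesis
  proof (rule that[OF E_affine E_sub])
    show "0 < measure M (E \<inter> B)"
      using E by (simp add: F_def)
    fix w b assume nsub: "\<not> E \<subseteq> {y. w \<bullet> y = b}"
    show "measure M (E \<inter> {y. w \<bullet> y = b} \<inter> B) = 0"
    proof (rule ccontr)
      let ?H = "{y. w \<bullet> y = b}"
      assume "measure M (E \<inter> ?H \<inter> B) \<noteq> 0"
      then have pos: "0 < measure M (E \<inter> ?H \<inter> B)"
        by (simp add: zero_less_measure_iff)
      have "affine (E \<inter> ?H)"
        using E_affine by (intro affine_Int affine_hyperplane)
      with pos E_sub have "F (E \<inter> ?H)"
        by (auto simp: F_def)
      then have le: "nat (aff_dim E) \<le> nat (aff_dim (E \<inter> ?H))"
        by (rule min)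
      have ne: "E \<inter> ?H \<noteq> {}"
        using pos by auto
      then have "aff_dim (E \<inter> ?H) = aff_dim E - 1"
        using aff_dim_affine_Int_hyperplane[OF E_affine, of w b] nsub by simp
      moreover have "0 \<le> aff_dim (E \<inter> ?H)"
        using ne aff_dim_negative_iff[of "E \<inter> ?H"] by linarith
      ultimately show False
        using le by linarith
    qed
  qed
qed

definition barycenter :: "'a::euclidean_space measure \<Rightarrow> 'a set \<Rightarrow> 'a" where
  "barycenter M K = (1 / measure M K) *\<^sub>R (\<integral>y. indicator K y *\<^sub>R y \<partial>M)"

locale euclidean_finite_measure = finite_measure M for M :: "'a::euclidean_space measure" +
  assumes sets_M [measurable_cong]: "sets M = sets borel"
begin

lemma space_M: "space M = UNIV"
  using sets_eq_imp_space_eq[OF sets_M] by simp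

lemma hdepth_le_refined_halfspace:
  assumes "u \<noteq> 0"
  shows "hdepth M s \<le> measure M (refined_halfspace s u w)"
proof -
  define t :: "nat \<Rightarrow> real" where "t n = inverse (real (Suc n))" for n
  define H where "H n = {y. (y - s) \<bullet> (u + t n *\<^sub>R w) \<le> 0}" for n
  have t: "t \<longlonglongrightarrow> 0" "\<And>n. 0 < t n"
    unfolding t_def by (rule LIMSEQ_inverse_real_of_nat) simp
  have "(\<lambda>n. u + t n *\<^sub>R w) \<longlonglongrightarrow> u"
    using tendsto_add[OF tendsto_const tendsto_scaleR[OF t(1) tendsto_const]] by simp
  then have "eventually (\<lambda>n. u + t n *\<^sub>R w \<noteq> 0) sequentially"
    using assms by (rule tendsto_imp_eventually_ne)
  then have "eventually (\<lambda>n. hdepth M s \<le> measure M (H n)) sequentially"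
  proof eventually_elim
    case (elim n)
    have "{y. y \<bullet> (u + t n *\<^sub>R w) \<le> s \<bullet> (u + t n *\<^sub>R w)} = H n"
      by (auto simp: H_def inner_diff_left)
    then show ?case
      using hdepth_le_halfspace[OF elim, of M s] by simp
  qed
  moreover have lim: "AE y in M. (\<lambda>n. indicator (H n) y :: real) \<longlonglongrightarrow> indicator (refined_halfspace s u w) y"
    unfolding H_def by (intro AE_I2 tendsto_indicator_refined_halfspace[OF t])
  have "(\<lambda>n. integral\<^sup>L M (indicator (H n)))
      \<longlonglongrightarrow> integral\<^sup>L M (indicator (refined_halfspace s u w) :: 'a \<Rightarrow> real)"
    by (rule integral_dominated_convergence[where w = "\<lambda>_. 1", OF _ _ _ lim])
      (auto simp: H_def indicator_def refined_halfspace_def)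
  then have "(\<lambda>n. measure M (H n)) \<longlonglongrightarrow> measure M (refined_halfspace s u w)"
    by (simp add: space_M)
  ultimately show ?thesis
    by (intro LIMSEQ_le_const) (auto simp: eventually_sequentially)
qed

lemma hdepth_le_halfspace_diff_atom:
  assumes u: "u \<noteq> 0" and p: "(p - x) \<bullet> u \<le> 0" "p \<noteq> x"
  shows "hdepth M p \<le> measure M {y. y \<bullet> u \<le> x \<bullet> u} - measure M {x}"
proof -
  \<comment> \<open>Refining the halfspace at \<open>p\<close> in direction \<open>x - p\<close> cuts \<open>x\<close> off.\<close>
  have "hdepth M p \<le> measure M (refined_halfspace p u (x - p))"
    by (rule hdepth_le_refined_halfspace[OF u])
  also have "\<dots> \<le> measure M ({y. y \<bullet> u \<le> x \<bullet> u} - {x})"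
  proof (rule finite_measure_mono)
    have "(x - p) \<bullet> (x - p) > 0"
      using p(2) by simp
    then show "refined_halfspace p u (x - p) \<subseteq> {y. y \<bullet> u \<le> x \<bullet> u} - {x}"
      using p(1) by (auto simp: refined_halfspace_def inner_diff_left)
  qed (simp add: sets_M)
  also have "\<dots> = measure M {y. y \<bullet> u \<le> x \<bullet> u} - measure M {x}"
    by (intro finite_measure_Diff) (auto simp: sets_M)
  finally show ?thesis .
qed

lemma extreme_point_of_depth_region_atom:
  assumes atom: "hdepth M x - measure M {x} < \<beta>" and "\<beta> \<le> hdepth M x"
  shows "x extreme_point_of (depth_region M \<beta>)"
  unfolding extreme_point_of_def
proof (intro conjI ballI)
  show "x \<in> depth_region M \<beta>"
    using assms(2) by (simp add: depth_region_def)
  fix a c assume a: "a \<in> depth_region M \<beta>" and c: "c \<in> depth_region M \<beta>"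
  show "x \<notin> open_segment a c"
  proof
    assume x: "x \<in> open_segment a c"
    obtain u where u: "u \<noteq> 0" "measure M {y. y \<bullet> u \<le> x \<bullet> u} < \<beta> + measure M {x}"
      using hdepth_less_obtains_halfspace[of M x "\<beta> + measure M {x}"] atom by auto
    obtain p where p: "p \<in> {a, c}" "(p - x) \<bullet> u \<le> 0"
      using open_segment_endpoint_in_halfspace[OF x] by blast
    have "p \<noteq> x"
      using p(1) x by (auto simp: open_segment_def)
    then have "hdepth M p \<le> measure M {y. y \<bullet> u \<le> x \<bullet> u} - measure M {x}"
      by (rule hdepth_le_halfspace_diff_atom[OF u(1) p(2)])
    moreover have "\<beta> \<le> hdepth M p"
      using p(1) a c by (auto simp: depth_region_def)
    ultimately show False
      using u(2) by linarith
  qed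
qed

lemma hdepth_le_across_open_segment:
  assumes z: "z \<in> depth_region_strict M (hdepth M x)" and x: "x \<in> open_segment y z"
  shows "hdepth M y \<le> hdepth M x - measure M {x}"
proof (rule ccontr)
  assume "\<not> ?thesis"
  with z have "hdepth M x < min (hdepth M z) (hdepth M y + measure M {x})"
    by (simp add: depth_region_strict_def)
  then obtain u where u: "u \<noteq> 0"
    "measure M {v. v \<bullet> u \<le> x \<bullet> u} < min (hdepth M z) (hdepth M y + measure M {x})"
    by (rule hdepth_less_obtains_halfspace)
  consider "(y - x) \<bullet> u \<le> 0" | "(z - x) \<bullet> u \<le> 0"
    using open_segment_endpoint_in_halfspace[OF x] by blast
  then show False
  proof cases
    case 1
    moreover have "y \<noteq> x"
      using x by (auto simp: open_segment_def)
    ultimately have "hdepth M y \<le> measure M {v. v \<bullet> u \<le> x \<bullet> u} - measure M {x}"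
      by (intro hdepth_le_halfspace_diff_atom u(1))
    then show False
      using u(2) by linarith
  next
    case 2
    then have "{v. v \<bullet> u \<le> z \<bullet> u} \<subseteq> {v. v \<bullet> u \<le> x \<bullet> u}"
      by (auto simp: inner_diff_left)
    then have "measure M {v. v \<bullet> u \<le> z \<bullet> u} \<le> measure M {v. v \<bullet> u \<le> x \<bullet> u}"
      by (rule finite_measure_mono) (simp add: sets_M)
    moreover have "hdepth M z \<le> measure M {v. v \<bullet> u \<le> z \<bullet> u}"
      by (rule hdepth_le_halfspace[OF u(1)])
    ultimately show False
      using u(2) by linarith
  qed
qed

section \<open>Barycentres\<close>

lemma integrable_indicator_scaleR_bounded:
  assumes K: "K \<in> sets M" "bounded K"
  shows "integrable M (\<lambda>y. indicator K y *\<^sub>R y)"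
proof -
  obtain B where B: "\<And>y. y \<in> K \<Longrightarrow> norm y \<le> B"
    using K(2) by (auto simp: bounded_iff)
  have "norm (indicator K y *\<^sub>R y) \<le> max 0 B" for y
    using B[of y] by (cases "y \<in> K") auto
  moreover have "(\<lambda>y. indicator K y *\<^sub>R y) \<in> borel_measurable M"
    using K(1) by (intro borel_measurable_scaleR borel_measurable_indicator) (auto simp: sets_M)
  ultimately show ?thesis
    by (intro integrable_const_bound[where B = "max 0 B"]) auto
qed

lemma integrable_indicator_inner:
  assumes K: "K \<in> sets M" "bounded K"
  shows "integrable M (\<lambda>y. indicator K y * (a \<bullet> y))"
  using integrable_inner_left[OF integrable_indicator_scaleR_bounded[OF K], of a]
  by (simp add: inner_commute)

lemma integral_indicator_inner_eq_barycenter: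
  assumes K: "K \<in> sets M" "bounded K" "0 < measure M K"
  shows "(\<integral>y. indicator K y * (a \<bullet> y) \<partial>M) = measure M K * (a \<bullet> barycenter M K)"
proof -
  have "(\<integral>y. indicator K y * (a \<bullet> y) \<partial>M) = (\<integral>y. (indicator K y *\<^sub>R y) \<bullet> a \<partial>M)"
    by (simp add: inner_commute)
  also have "\<dots> = (\<integral>y. indicator K y *\<^sub>R y \<partial>M) \<bullet> a"
    using integrable_indicator_scaleR_bounded[OF K(1,2)] by (rule integral_inner_left)
  also have "\<dots> = measure M K * (a \<bullet> barycenter M K)"
    using K(3) by (simp add: barycenter_def inner_commute)
  finally show ?thesis .
qed

lemma barycenter_in_closed_convex:
  assumes K: "K \<in> sets M" "bounded K" "0 < measure M K"
    and C: "K \<subseteq> C" "convex C" "closed C"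
  shows "barycenter M K \<in> C"
proof (rule ccontr)
  assume "barycenter M K \<notin> C"
  then obtain a b where ab: "a \<bullet> barycenter M K < b" "\<And>x. x \<in> C \<Longrightarrow> b < a \<bullet> x"
    using separating_hyperplane_closed_point[OF C(2,3)] by blast
  have "(\<integral>y. indicator K y * b \<partial>M) \<le> (\<integral>y. indicator K y * (a \<bullet> y) \<partial>M)"
  proof (rule integral_mono)
    show "integrable M (\<lambda>y. indicator K y * b)"
      using K(1) by (intro integrable_mult_left integrable_real_indicator) (simp_all add: emeasure_eq_measure)
    show "integrable M (\<lambda>y. indicator K y * (a \<bullet> y))"
      by (rule integrable_indicator_inner[OF K(1,2)])
    show "indicator K y * b \<le> indicator K y * (a \<bullet> y)" for y
      using ab(2)[of y] C(1) by (cases "y \<in> K") auto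
  qed
  then have "measure M K * b \<le> measure M K * (a \<bullet> barycenter M K)"
    using K(1) by (simp add: integral_indicator_inner_eq_barycenter[OF K] space_M mult.commute)
  then show False
    using ab(1) K(3) by simp
qed

lemma measure_open_halfspace_barycenter_pos:
  assumes K: "K \<in> sets M" "bounded K" "0 < measure M K"
    and null: "measure M (K \<inter> {y. (y - barycenter M K) \<bullet> w = 0}) = 0"
  shows "0 < measure M (K \<inter> {y. (y - barycenter M K) \<bullet> w < 0})"
proof -
  define c where "c = barycenter M K"
  define g where "g = (\<lambda>y. indicator K y * (w \<bullet> y) - indicator K y * (w \<bullet> c))"
  have int_const: "integrable M (\<lambda>y. indicator K y * (w \<bullet> c))"
    using K(1) by (intro integrable_mult_left integrable_real_indicator) (simp_all add: emeasure_eq_measure)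
  have int: "integrable M g"
    unfolding g_def using integrable_indicator_inner[OF K(1,2)] int_const by simp
  have "integral\<^sup>L M g = 0"
    using integrable_indicator_inner[OF K(1,2)] int_const K(1)
    by (simp add: g_def integral_indicator_inner_eq_barycenter[OF K] c_def space_M)
  have "0 < measure M (K \<inter> {y. (y - c) \<bullet> w < 0})"
  proof (rule ccontr)
    assume "\<not> ?thesis"
    then have "K \<inter> {y. (y - c) \<bullet> w < 0} \<in> null_sets M"
      using K(1) measure_nonneg[of M "K \<inter> {y. (y - c) \<bullet> w < 0}"]
      by (intro null_setsI) (auto simp: emeasure_eq_measure sets_M)
    then have "AE y in M. 0 \<le> g y"
      by (rule AE_not_in[THEN eventually_mono])
        (auto simp: g_def indicator_def inner_diff_left inner_diff_right inner_commute)
    with int \<open>integral\<^sup>L M g = 0\<close> have "AE y in M. g y = 0"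
      by (simp add: integral_nonneg_eq_0_iff_AE)
    then have "AE y in M. y \<in> K \<longrightarrow> y \<in> K \<inter> {y. (y - c) \<bullet> w = 0}"
      by (auto elim!: eventually_mono simp: g_def indicator_def inner_diff_left inner_diff_right inner_commute)
    then have "measure M K \<le> measure M (K \<inter> {y. (y - c) \<bullet> w = 0})"
      using K(1) by (intro finite_measure_mono_AE) (auto simp: sets_M)
    then show False
      using null K(3) by (simp add: c_def)
  qed
  then show ?thesis
    by (simp add: c_def)
qed

lemma measure_halfspace_margin_pos:
  assumes K: "K \<in> sets M" and pos: "0 < measure M (K \<inter> {y. (y - c) \<bullet> w < 0})"
  obtains \<epsilon> where "0 < \<epsilon>" "0 < measure M (K \<inter> {y. (y - c) \<bullet> w < - \<epsilon>})"
proof -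
  define e :: "nat \<Rightarrow> real" where "e n = inverse (real (Suc n))" for n
  have e_pos: "0 < e n" and e_Suc: "e (Suc n) \<le> e n" for n
    by (simp_all add: e_def le_imp_inverse_le del: of_nat_Suc)
  define Q where "Q n = K \<inter> {y. (y - c) \<bullet> w < - e n}" for n
  have "(\<Union>n. Q n) = K \<inter> {y. (y - c) \<bullet> w < 0}"
  proof (intro equalityI subsetI)
    fix y assume y: "y \<in> K \<inter> {y. (y - c) \<bullet> w < 0}"
    then obtain n where "e n < - ((y - c) \<bullet> w)"
      using reals_Archimedean[of "- ((y - c) \<bullet> w)"] by (auto simp: e_def)
    then have "y \<in> Q n"
      using y by (simp add: Q_def)
    then show "y \<in> (\<Union>n. Q n)"
      by blast
  next
    fix y assume "y \<in> (\<Union>n. Q n)"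
    then obtain n where n: "y \<in> K" "(y - c) \<bullet> w < - e n"
      by (auto simp: Q_def)
    with e_pos[of n] show "y \<in> K \<inter> {y. (y - c) \<bullet> w < 0}"
      by simp
  qed
  moreover have "incseq Q"
  proof (rule incseq_SucI)
    show "Q n \<subseteq> Q (Suc n)" for n
      using e_Suc[of n] by (auto simp: Q_def)
  qed
  moreover have "range Q \<subseteq> sets M"
  proof safe
    fix n
    have "{y. (y - c) \<bullet> w < - e n} \<in> sets M"
      unfolding sets_M by (intro borel_open open_Collect_less continuous_intros)
    with K show "Q n \<in> sets M"
      by (simp add: Q_def sets.Int)
  qed
  ultimately have "(\<lambda>n. measure M (Q n)) \<longlonglongrightarrow> measure M (K \<inter> {y. (y - c) \<bullet> w < 0})"
    using finite_Lim_measure_incseq[of Q] by simp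
  then have "eventually (\<lambda>n. 0 < measure M (Q n)) sequentially"
    using pos by (rule order_tendstoD(1))
  then obtain n where "0 < measure M (Q n)"
    by (auto simp: eventually_sequentially)
  then show ?thesis
    using that[OF e_pos[of n]] by (simp add: Q_def)
qed

lemma measure_open_halfspace_locally_bounded_below:
  assumes K: "K \<in> sets M" "K \<subseteq> ball c D" and pos: "0 < measure M (K \<inter> {y. (y - c) \<bullet> w < 0})"
  shows "\<exists>\<delta>>0. \<exists>k>0. \<forall>w'. dist w w' < \<delta> \<longrightarrow> k \<le> measure M (K \<inter> {y. (y - c) \<bullet> w' < 0})"
proof -
  obtain \<epsilon> where \<epsilon>: "0 < \<epsilon>" "0 < measure M (K \<inter> {y. (y - c) \<bullet> w < - \<epsilon>})"
    using measure_halfspace_margin_pos[OF K(1) pos] by blast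
  then have "K \<noteq> {}"
    by auto
  then obtain y0 where "y0 \<in> K"
    by blast
  then have "dist c y0 < D"
    using K(2) by auto
  then have D: "0 < D"
    using zero_le_dist[of c y0] by linarith
  show ?thesis
  proof (intro exI conjI allI impI)
    show "0 < \<epsilon> / D" "0 < measure M (K \<inter> {y. (y - c) \<bullet> w < - \<epsilon>})"
      using D \<epsilon> by simp_all
    fix w' assume dw: "dist w w' < \<epsilon> / D"
    have "K \<inter> {y. (y - c) \<bullet> w < - \<epsilon>} \<subseteq> K \<inter> {y. (y - c) \<bullet> w' < 0}"
    proof safe
      fix y assume y: "y \<in> K" "(y - c) \<bullet> w < - \<epsilon>"
      have "(y - c) \<bullet> (w' - w) \<le> norm (y - c) * norm (w' - w)"
        by (rule norm_cauchy_schwarz)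
      also have "\<dots> \<le> D * norm (w' - w)"
        using K(2) y(1) by (intro mult_right_mono) (auto simp: dist_norm norm_minus_commute)
      also have "\<dots> < \<epsilon>"
        using dw D by (simp add: dist_norm norm_minus_commute field_simps)
      finally show "(y - c) \<bullet> w' < 0"
        using y(2) by (simp add: inner_diff_right)
    qed
    then show "measure M (K \<inter> {y. (y - c) \<bullet> w < - \<epsilon>}) \<le> measure M (K \<inter> {y. (y - c) \<bullet> w' < 0})"
      using K(1) by (intro finite_measure_mono) (auto simp: sets_M)
  qed
qed

lemma barycenter_open_halfspaces_uniform_mass:
  assumes K: "K \<in> sets M" "0 < measure M K" "K \<subseteq> ball (barycenter M K) R" and S: "subspace S"
    and null: "\<And>w. w \<in> S \<Longrightarrow> norm w = 1 \<Longrightarrow> measure M (K \<inter> {y. (y - barycenter M K) \<bullet> w = 0}) = 0"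
  obtains \<kappa> where "0 < \<kappa>"
    "\<And>w. w \<in> S \<Longrightarrow> norm w = 1 \<Longrightarrow> \<kappa> \<le> measure M (K \<inter> {y. (y - barycenter M K) \<bullet> w < 0})"
proof -
  have bounded: "bounded K"
    using K(3) bounded_ball bounded_subset by blast
  obtain \<kappa> where \<kappa>: "0 < \<kappa>"
    "\<And>w. w \<in> sphere 0 1 \<inter> S \<Longrightarrow> \<kappa> \<le> measure M (K \<inter> {y. (y - barycenter M K) \<bullet> w < 0})"
  proof (rule compact_uniform_lower_bound)
    show "compact (sphere 0 1 \<inter> S)"
      using S by (intro compact_Int_closed compact_sphere closed_subspace)
    fix w assume "w \<in> sphere 0 1 \<inter> S"
    then have "0 < measure M (K \<inter> {y. (y - barycenter M K) \<bullet> w < 0})"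
      using K(1,2) bounded null by (intro measure_open_halfspace_barycenter_pos) auto
    then show "\<exists>\<delta>>0. \<exists>k>0. \<forall>w'. dist w w' < \<delta> \<longrightarrow>
        k \<le> measure M (K \<inter> {y. (y - barycenter M K) \<bullet> w' < 0})"
      by (rule measure_open_halfspace_locally_bounded_below[OF K(1,3)])
  qed (rule that)
  then show ?thesis
    using that[OF \<kappa>(1)] by simp
qed

section \<open>Depth plateaus carry no mass\<close>

lemma hdepth_ge_add_of_open_halfspace_mass:
  assumes S: "subspace S" "S \<noteq> {0}"
    and K: "K \<in> sets M" "\<And>y. y \<in> K \<Longrightarrow> y - c \<in> S" "K \<subseteq> ball c R" and R: "0 \<le> R"
    and mass: "\<And>w. w \<in> S \<Longrightarrow> norm w = 1 \<Longrightarrow> \<kappa> \<le> measure M (K \<inter> {y. (y - c) \<bullet> w < 0})"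
    and depth: "\<And>w. w \<in> S \<Longrightarrow> norm w = 1 \<Longrightarrow> \<alpha> \<le> hdepth M (c - R *\<^sub>R w)"
  shows "\<alpha> + \<kappa> \<le> hdepth M c"
proof (rule hdepth_geI)
  fix u :: 'a assume u: "u \<noteq> 0"
  obtain w l where w: "w \<in> S" "norm w = 1" and l: "0 \<le> l" "\<And>d. d \<in> S \<Longrightarrow> d \<bullet> u = l * (d \<bullet> w)"
    using subspace_inner_eq_scaled_unit[OF S, of u] by blast
  have ww: "w \<bullet> w = 1" and wu: "w \<bullet> u = l"
    using l(2)[OF w(1)] w(2) by (simp_all add: norm_eq_1)
  define H where "H = {y. y \<bullet> u \<le> c \<bullet> u}"
  define P where "P = refined_halfspace (c - R *\<^sub>R w) u w"
  define Q where "Q = K \<inter> {y. (y - c) \<bullet> w < 0}"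
  \<comment> \<open>\<open>Q\<close> lies in the slab between the hyperplanes normal to \<open>w\<close> through \<open>c - R w\<close> and \<open>c\<close>.\<close>
  have PH: "P \<subseteq> H"
    unfolding P_def H_def using wu R l(1) by (intro refined_halfspace_subset_halfspace) simp
  have QH: "Q \<subseteq> H - P"
  proof
    fix y assume "y \<in> Q"
    then have y: "y \<in> K" "(y - c) \<bullet> w < 0"
      by (simp_all add: Q_def)
    have yu: "(y - c) \<bullet> u = l * ((y - c) \<bullet> w)"
      using l(2) K(2)[OF y(1)] by simp
    have "\<bar>(y - c) \<bullet> w\<bar> \<le> norm (y - c)"
      using Cauchy_Schwarz_ineq2[of "y - c" w] w(2) by simp
    moreover have "norm (y - c) < R"
      using K(3) y(1) by (auto simp: dist_norm norm_minus_commute)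
    ultimately have "y \<notin> P"
      unfolding P_def using ww wu l(1) yu by (intro not_in_refined_halfspace) auto
    moreover have "(y - c) \<bullet> u \<le> 0"
      using yu l(1) y(2) by (simp add: mult_nonneg_nonpos)
    ultimately show "y \<in> H - P"
      by (simp add: H_def inner_diff_left)
  qed
  have sets: "P \<in> sets M" "Q \<in> sets M" "H \<in> sets M"
    using K(1) unfolding P_def Q_def H_def refined_halfspace_def sets_M by measurable
  have "\<alpha> + \<kappa> \<le> measure M P + measure M Q"
    using depth[OF w] hdepth_le_refined_halfspace[OF u, of "c - R *\<^sub>R w" w] mass[OF w]
    by (simp add: P_def Q_def add_mono)
  also have "\<dots> = measure M (P \<union> Q)"
    using QH by (intro finite_measure_Union[symmetric] sets) auto
  also have "\<dots> \<le> measure M H"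
    using PH QH by (intro finite_measure_mono sets) auto
  finally show "\<alpha> + \<kappa> \<le> measure M {y. y \<bullet> u \<le> c \<bullet> u}"
    by (simp add: H_def)
qed

lemma hdepth_barycenter_gt:
  assumes K: "K \<in> sets M" "K \<subseteq> E" "0 < measure M K" "K \<subseteq> ball (barycenter M K) R" and R: "0 \<le> R"
    and E: "affine E" "e \<in> E" "e' \<in> E" "e \<noteq> e'"
    and null: "\<And>w b. \<not> E \<subseteq> {y. w \<bullet> y = b} \<Longrightarrow> measure M (K \<inter> {y. w \<bullet> y = b}) = 0"
    and depth: "\<And>y. y \<in> E \<Longrightarrow> dist (barycenter M K) y = R \<Longrightarrow> \<alpha> \<le> hdepth M y"
  shows "\<alpha> < hdepth M (barycenter M K)"
proof -
  define c where "c = barycenter M K"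
  define S where "S = (\<lambda>y. y - c) ` E"
  have c: "c \<in> E"
    unfolding c_def using K(1-3) E(1) bounded_subset[OF bounded_ball K(4)]
    by (intro barycenter_in_closed_convex affine_imp_convex affine_closed)
  have S: "subspace S"
    unfolding S_def by (rule affine_diffs_subspace_subtract[OF E(1) c])
  have memS: "d \<in> S \<longleftrightarrow> c + d \<in> E" for d
    by (force simp: S_def)
  have "S \<noteq> {0}"
    using E(2-4) memS[of "e - c"] memS[of "e' - c"] by auto
  have "measure M (K \<inter> {y. (y - c) \<bullet> w = 0}) = 0" if w: "w \<in> S" "norm w = 1" for w
  proof -
    have "w \<bullet> (c + w) \<noteq> w \<bullet> c"
      using w(2) by (simp add: inner_add_right norm_eq_1)
    then have "\<not> E \<subseteq> {y. w \<bullet> y = w \<bullet> c}"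
      using w(1) memS[of w] by blast
    moreover have "{y. (y - c) \<bullet> w = 0} = {y. w \<bullet> y = w \<bullet> c}"
      by (auto simp: inner_diff_left inner_commute[of w])
    ultimately show ?thesis
      using null[of w "w \<bullet> c"] by simp
  qed
  then obtain \<kappa> where \<kappa>: "0 < \<kappa>"
    "\<And>w. w \<in> S \<Longrightarrow> norm w = 1 \<Longrightarrow> \<kappa> \<le> measure M (K \<inter> {y. (y - c) \<bullet> w < 0})"
    using barycenter_open_halfspaces_uniform_mass[OF K(1,3,4) S] unfolding c_def by blast
  have "\<alpha> + \<kappa> \<le> hdepth M c"
  proof (rule hdepth_ge_add_of_open_halfspace_mass[OF S \<open>S \<noteq> {0}\<close> K(1) _ _ R \<kappa>(2)])
    show "y - c \<in> S" if "y \<in> K" for y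
      using that K(2) memS[of "y - c"] by auto
    show "K \<subseteq> ball c R"
      using K(4) by (simp add: c_def)
    show "\<alpha> \<le> hdepth M (c - R *\<^sub>R w)" if w: "w \<in> S" "norm w = 1" for w
    proof (rule depth[folded c_def])
      show "c - R *\<^sub>R w \<in> E"
        using memS[of "(- R) *\<^sub>R w"] subspace_scale[OF S w(1), of "- R"] by simp
      show "dist c (c - R *\<^sub>R w) = R"
        using w(2) R by (simp add: dist_norm)
    qed
  qed
  then show ?thesis
    using \<kappa>(1) by (simp add: c_def)
qed

lemma atom_not_in_hdepth_plateau:
  assumes A: "affine A" "p \<in> A" "q \<in> A" "p \<noteq> q"
    and const: "\<And>y. y \<in> A \<inter> ball x0 r \<Longrightarrow> hdepth M y = \<alpha>" and c: "c \<in> A \<inter> ball x0 r"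
  shows "measure M {c} = 0"
proof (rule ccontr)
  assume "measure M {c} \<noteq> 0"
  then have "hdepth M c - measure M {c} < \<alpha>"
    using const[OF c] by (simp add: zero_less_measure_iff)
  then have "c extreme_point_of depth_region M \<alpha>"
    using const[OF c] by (simp add: extreme_point_of_depth_region_atom)
  moreover obtain q' where q': "q' \<in> A" "q' \<noteq> c"
    using A(2-4) by blast
  have "c \<in> A" "0 < r - dist x0 c"
    using c by auto
  then obtain a b where ab: "a \<in> A \<inter> ball c (r - dist x0 c)" "b \<in> A \<inter> ball c (r - dist x0 c)"
    and "c \<in> open_segment a b"
    using exists_open_segment_in_affine_ball[OF A(1) _ q'] by blast
  moreover have "a \<in> A \<inter> ball x0 r" "b \<in> A \<inter> ball x0 r"
    using ab dist_triangle[of x0 a c] dist_triangle[of x0 b c] by (auto simp: dist_commute)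
  ultimately show False
    using const by (auto simp: extreme_point_of_def depth_region_def)
qed

lemma barycenter_in_affine_cball:
  assumes "K \<in> sets M" "0 < measure M K" "affine E" "K \<subseteq> E \<inter> ball x \<rho>"
  shows "barycenter M K \<in> E \<inter> cball x \<rho>"
  using assms bounded_subset[OF bounded_ball, of K x \<rho>]
  by (intro barycenter_in_closed_convex convex_Int closed_Int affine_imp_convex affine_closed convex_cball closed_cball)
    auto

lemma measure_affine_ball_eq_0_if_hdepth_constant:
  assumes A: "affine A" "p \<in> A" "q \<in> A" "p \<noteq> q" and r: "0 < r"
    and const: "\<And>y. y \<in> A \<inter> ball x0 r \<Longrightarrow> hdepth M y = \<alpha>"
  shows "measure M (A \<inter> ball x0 (r / 4)) = 0"
proof (rule ccontr)
  \<comment> \<open>The radius \<open>r / 4\<close> leaves room for points of \<open>E\<close> at distance \<open>2 \<rho>\<close> from the barycentre.\<close>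
  define \<rho> where "\<rho> = r / 4"
  have \<rho>: "0 < \<rho>"
    using r by (simp add: \<rho>_def)
  assume "measure M (A \<inter> ball x0 (r / 4)) \<noteq> 0"
  then have "0 < measure M (A \<inter> ball x0 \<rho>)"
    by (simp add: \<rho>_def zero_less_measure_iff)
  then obtain E where E: "affine E" "E \<subseteq> A" "0 < measure M (E \<inter> ball x0 \<rho>)"
    and null: "\<And>w b. \<not> E \<subseteq> {y. w \<bullet> y = b} \<Longrightarrow> measure M (E \<inter> {y. w \<bullet> y = b} \<inter> ball x0 \<rho>) = 0"
    by (rule exists_affine_null_hyperplane_sections[OF A(1)]) blast
  define K where "K = E \<inter> ball x0 \<rho>"
  have K: "K \<in> sets M" "K \<subseteq> E" "0 < measure M K" "K \<noteq> {}"
    using E affine_closed[OF E(1)] by (auto simp: K_def sets_M)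
  have near: "y \<in> A \<inter> ball x0 r" if "y \<in> E" "dist x0 z \<le> \<rho>" "dist z y \<le> 2 * \<rho>" for y z
    using that E(2) r dist_triangle[of x0 y z] by (auto simp: \<rho>_def)
  obtain e where e: "e \<in> E"
    using K(2,4) by blast
  consider "E = {e}" | e' where "e' \<in> E" "e' \<noteq> e"
    using e by blast
  then show False
  proof cases
    case 1
    then have Ke: "K = {e}" "dist x0 e < \<rho>"
      using K(4) by (auto simp: K_def)
    then have "e \<in> A \<inter> ball x0 r"
      using near[of e e] e \<rho> by simp
    then have "measure M {e} = 0"
      using atom_not_in_hdepth_plateau[OF A const] by blast
    then show False
      using K(3) Ke(1) by simp
  next
    case 2
    define c where "c = barycenter M K"
    have c: "c \<in> E" "dist x0 c \<le> \<rho>"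
      using barycenter_in_affine_cball[OF K(1,3) E(1)] by (auto simp: c_def K_def)
    have "ball x0 \<rho> \<subseteq> ball c (2 * \<rho>)"
      using c(2) by (subst ball_subset_ball_iff) simp
    then have "K \<subseteq> ball c (2 * \<rho>)"
      by (auto simp: K_def)
    then have "\<alpha> < hdepth M c"
      unfolding c_def
    proof (rule hdepth_barycenter_gt[OF K(1-3) _ _ E(1) e 2(1) 2(2)[symmetric]])
      show "0 \<le> 2 * \<rho>"
        using \<rho> by simp
      show "measure M (K \<inter> {y. w \<bullet> y = b}) = 0" if "\<not> E \<subseteq> {y. w \<bullet> y = b}" for w b
        using null[OF that] by (simp add: K_def Int_ac)
      show "\<alpha> \<le> hdepth M y" if "y \<in> E" "dist (barycenter M K) y = 2 * \<rho>" for y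
        using that c(2) near[of y c] const by (simp add: c_def)
    qed
    moreover have "hdepth M c = \<alpha>"
      using c near[of c c] r const by (simp add: \<rho>_def)
    ultimately show False
      by simp
  qed
qed

lemma msupp_restr_measure_subset:
  assumes C: "closed C" and A: "A \<in> sets M" and null: "measure M (A - C) = 0"
  shows "msupp (restr_measure M A) \<subseteq> C"
proof -
  have space: "space (restr_measure M A) = UNIV" and sets: "sets (restr_measure M A) = sets M"
    by (simp_all add: restr_measure_def space_M)
  have "emeasure (restr_measure M A) (UNIV - C) = emeasure M ((UNIV - C) \<inter> A)"
    using A C unfolding restr_measure_def
    by (subst emeasure_density) (auto simp: sets_M indicator_inter_arith[symmetric] Int_commute)
  also have "\<dots> = 0"
    using null by (simp add: emeasure_eq_measure Diff_eq Int_commute)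
  finally show ?thesis
    unfolding msupp_def using C space sets by (auto simp: sets_M)
qed

lemma msupp_restr_measure_subset_closure_frontier:
  assumes A: "affine A" "p \<in> A" "q \<in> A" "p \<noteq> q"
  shows "msupp (restr_measure M A) \<subseteq>
    (subtopology euclidean A) closure_of
      (\<Union>\<alpha>\<in>{0..}. (subtopology euclidean A) frontier_of (depth_region M \<alpha> \<inter> A))"
    (is "_ \<subseteq> ?X closure_of ?U")
proof
  fix x0 assume x0: "x0 \<in> msupp (restr_measure M A)"
  have A_sets: "A \<in> sets M"
    using affine_closed[OF A(1)] by (simp add: sets_M)
  have "msupp (restr_measure M A) \<subseteq> A"
    by (rule msupp_restr_measure_subset[OF affine_closed[OF A(1)] A_sets]) simp
  then have x0A: "x0 \<in> A"
    using x0 by blast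
  show "x0 \<in> ?X closure_of ?U"
  proof (rule ccontr)
    assume "x0 \<notin> ?X closure_of ?U"
    then obtain T where T: "x0 \<in> T" "openin ?X T" "T \<inter> ?U = {}"
      using x0A by (auto simp: in_closure_of)
    then obtain r where r: "0 < r" "ball x0 r \<inter> A \<subseteq> T"
      by (auto simp: openin_contains_ball)
    have const: "hdepth M y = hdepth M x0" if "y \<in> A \<inter> ball x0 r" for y
    proof (rule hdepth_eq_on_connected)
      show "connected (A \<inter> ball x0 r)"
        using A(1) by (intro convex_connected convex_Int affine_imp_convex convex_ball)
      show "A \<inter> ball x0 r \<inter> ?U = {}"
        using r(2) T(3) by blast
    qed (use that x0A r(1) in auto)
    have "msupp (restr_measure M A) \<subseteq> - ball x0 (r / 4)"
      using measure_affine_ball_eq_0_if_hdepth_constant[OF A r(1) const] A_sets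
      by (intro msupp_restr_measure_subset) (auto simp: Diff_eq)
    then show False
      using x0 r(1) by auto
  qed
qed

end

theorem theorem1:
  fixes M :: "'a::euclidean_space measure"
  assumes borel: "sets M = sets borel"
    and fin: "finite_measure M"
  shows
    "(\<forall>A. affine A \<and> (\<exists>p\<in>A. \<exists>q\<in>A. p \<noteq> q) \<longrightarrow>
        msupp (restr_measure M A) \<subseteq>
          (subtopology euclidean A) closure_of
            (\<Union>\<alpha>\<in>{0..}. (subtopology euclidean A) frontier_of (depth_region M \<alpha> \<inter> A)))
   \<and> msupp M \<subseteq> closure (\<Union>\<alpha>\<in>{0..}. frontier (depth_region M \<alpha>))
   \<and> (\<forall>x \<alpha> \<beta>. measure M {x} > 0 \<and> hdepth M x = \<alpha> \<and> \<alpha> - measure M {x} < \<beta> \<and> \<beta> \<le> \<alpha>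
        \<longrightarrow> x extreme_point_of (depth_region M \<beta>))
   \<and> (\<forall>x y z \<alpha>. hdepth M x = \<alpha> \<and> z \<in> depth_region_strict M \<alpha> \<and> x \<in> open_segment y z
        \<longrightarrow> hdepth M y \<le> hdepth M x - measure M {x})"
proof -
  interpret euclidean_finite_measure M
    using fin borel by (simp add: euclidean_finite_measure_def euclidean_finite_measure_axioms_def)
  have part_i: "msupp (restr_measure M A) \<subseteq>
      (subtopology euclidean A) closure_of
        (\<Union>\<alpha>\<in>{0..}. (subtopology euclidean A) frontier_of (depth_region M \<alpha> \<inter> A))"
    if "affine A" "\<exists>p\<in>A. \<exists>q\<in>A. p \<noteq> q" for A
    using that msupp_restr_measure_subset_closure_frontier by blast
  have "\<exists>p::'a. \<exists>q. p \<noteq> q"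
    using nonzero_Basis SOME_Basis by blast
  then have "msupp (restr_measure M UNIV) \<subseteq> closure (\<Union>\<alpha>\<in>{0..}. frontier (depth_region M \<alpha>))"
    using part_i[of UNIV] by simp
  moreover have "restr_measure M UNIV = M"
    by (simp add: restr_measure_def density_1)
  ultimately show ?thesis
    using part_i extreme_point_of_depth_region_atom hdepth_le_across_open_segment by auto
qed

end
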